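(* Let $X\in\mathcal{M}(N,P)$ and let $K$ be a positive integer with $K\le\min(N,P)$. For $k=1,\dots,K$ let $P(\cdot;\lambda_k):\mathbb{R}^P\to\mathbb{R}$ be an arbitrary penalty function (with hyperparameter $\lambda_k$). Consider the penalized PCA problem $$\min_{Z\in\mathcal{S}(N,K),\,L\in\mathcal{M}(P,K)}\Big(\tfrac12\|X-ZL^T\|_F^2+\sum_{k=1}^K P(l_k;\lambda_k)\Big),\qquad (\ast)$$ where $l_k$ is the $k$-th column of $L$. If $(\hat Z,\hat L)$ is a minimizer of $(\ast)$, then $$\hat L\in\operatorname*{arg\,min}_{L\in\mathcal{M}(P,K)}\Big(\tfrac12 d_*(X^TX,LL^T)^2+\sum_{k=1}^K P(l_k;\lambda_k)\Big).\qquad (\ast\ast)$$ Conversely, if $\hat L$ is a minimizer of $(\ast\ast)$ and $\hat Z=\mathrm{Polar.U}(X\hat L)$ (computed from any thin SVD of $X\hat L$), then $(\hat Z,\hat L)$ is a minimizer of $(\ast)$.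
   Context: $\mathcal{M}(N,K)$ denotes the set of real $N\times K$ matrices and $\mathcal{S}(N,K)=\{M\in\mathcal{M}(N,K): M^TM=I_K\}$. $\|\cdot\|_F$ is the Frobenius norm. For a real matrix $M$ with thin SVD $M=UDV^T$, $\mathrm{Polar.U}(M):=UV^T$. For PSD matrices $A,B$ of the same size, $d_*(A,B):=\big(\operatorname{tr}(A)-2\operatorname{tr}(\sqrt{\sqrt{A}B\sqrt{A}})+\operatorname{tr}(B)\big)^{1/2}$ (Bures–Wasserstein distance), where $\sqrt{\cdot}$ is the PSD square root. *)

theory Defs
  imports "HOL-Analysis.Analysis"
begin

definition frob_norm :: "real^'n^'m \<Rightarrow> real" where
  "frob_norm A = sqrt (\<Sum>i\<in>UNIV. \<Sum>j\<in>UNIV. (A$i$j)^2)"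

definition stiefel :: "(real^'k^'n) set" where
  "stiefel = {M. transpose M ** M = mat 1}"

definition psd :: "real^'n^'n \<Rightarrow> bool" where
  "psd A \<longleftrightarrow> transpose A = A \<and> (\<forall>x. x \<bullet> (A *v x) \<ge> 0)"

definition psd_sqrt :: "real^'n^'n \<Rightarrow> real^'n^'n" where
  "psd_sqrt A = (THE S. psd S \<and> S ** S = A)"

definition bw_dist :: "real^'n^'n \<Rightarrow> real^'n^'n \<Rightarrow> real" where
  "bw_dist A B = sqrt (trace A - 2 * trace (psd_sqrt (psd_sqrt A ** B ** psd_sqrt A)) + trace B)"

definition thin_svd :: "real^'k^'n \<Rightarrow> real^'k^'n \<Rightarrow> real^'k^'k \<Rightarrow> real^'k^'k \<Rightarrow> bool" where
  "thin_svd M U D V \<longleftrightarrow> U \<in> stiefel \<and> (\<forall>i j. i \<noteq> j \<longrightarrow> D$i$j = 0) \<and> (\<forall>i. D$i$i \<ge> 0)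
     \<and> orthogonal_matrix V \<and> M = U ** D ** transpose V"

text \<open>Objective of the penalized PCA problem (*); pen k is P(.;lambda_k).\<close>
definition obj_pca :: "real^'p^'n \<Rightarrow> ('k \<Rightarrow> real^'p \<Rightarrow> real) \<Rightarrow> real^'k^'n \<Rightarrow> real^'k^'p \<Rightarrow> real" where
  "obj_pca X pen Z L = (1/2) * (frob_norm (X - Z ** transpose L))^2 + (\<Sum>k\<in>UNIV. pen k (column k L))"

definition obj_bw :: "real^'p^'n \<Rightarrow> ('k \<Rightarrow> real^'p \<Rightarrow> real) \<Rightarrow> real^'k^'p \<Rightarrow> real" where
  "obj_bw X pen L = (1/2) * (bw_dist (transpose X ** X) (L ** transpose L))^2 + (\<Sum>k\<in>UNIV. pen k (column k L))"

definition is_min_pca :: "real^'p^'n \<Rightarrow> ('k \<Rightarrow> real^'p \<Rightarrow> real) \<Rightarrow> real^'k^'n \<Rightarrow> real^'k^'p \<Rightarrow> bool" where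
  "is_min_pca X pen Z L \<longleftrightarrow> Z \<in> stiefel \<and>
     (\<forall>Z' L'. Z' \<in> stiefel \<longrightarrow> obj_pca X pen Z L \<le> obj_pca X pen Z' L')"

definition is_min_bw :: "real^'p^'n \<Rightarrow> ('k \<Rightarrow> real^'p \<Rightarrow> real) \<Rightarrow> real^'k^'p \<Rightarrow> bool" where
  "is_min_bw X pen L \<longleftrightarrow> (\<forall>L'. obj_bw X pen L \<le> obj_bw X pen L')"

end

theory Submission
  imports Defs
begin

text \<open>
  For a fixed loading matrix \<open>L\<close> and \<open>Z \<in> S(N,K)\<close> one has
  \<open>\<parallel>X - Z L\<^sup>T\<parallel>\<^sup>2 = tr(X\<^sup>TX) - 2 tr(Z\<^sup>T X L) + tr(L L\<^sup>T)\<close>, so minimizing over \<open>Z\<close> means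
  maximizing the linear functional \<open>tr(Z\<^sup>T X L)\<close> over the compact Stiefel manifold.
  First-order optimality of a maximizer \<open>Z\<close> (plane rotations of pairs of columns, rotations
  towards the orthogonal complement, a Householder reflection) shows that \<open>G = Z\<^sup>T X L\<close> is
  positive semidefinite and \<open>X L = Z G\<close>, i.e. \<open>Z\<close> is the orthogonal factor of a polar
  decomposition; the polar factor built from a thin SVD is another one.  Then
  \<open>G = ((XL)\<^sup>T XL)\<^sup>1\<^sup>/\<^sup>2\<close> by uniqueness of PSD square roots, and with \<open>S = (X\<^sup>TX)\<^sup>1\<^sup>/\<^sup>2\<close>
  the matrices \<open>(SL)(SL)\<^sup>T = S L L\<^sup>T S\<close> and \<open>(SL)\<^sup>T(SL) = (XL)\<^sup>T XL\<close> have square roots of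
  equal trace.  Hence \<open>min\<^sub>Z\<close> of the penalized PCA objective is exactly the Bures--Wasserstein
  objective of \<open>L\<close>, attained at the polar factor, and both directions follow.
\<close>

lemma linear_le_quadratic_imp_zero:
  fixes p q :: real
  assumes "\<forall>t. t * q \<le> t\<^sup>2 * p"
  shows "q = 0"
proof (rule ccontr)
  assume q: "q \<noteq> 0"
  define t where "t = q / (2 * (\<bar>p\<bar> + 1))"
  have "t * q \<le> t\<^sup>2 * p" using assms by blast
  moreover have "t\<^sup>2 * p \<le> t\<^sup>2 * \<bar>p\<bar>" by (simp add: mult_left_mono)
  moreover have "t * q = q\<^sup>2 / (2 * (\<bar>p\<bar> + 1))" by (simp add: t_def power2_eq_square)
  moreover have "t\<^sup>2 * \<bar>p\<bar> = (q\<^sup>2 / (2 * (\<bar>p\<bar> + 1))) * (\<bar>p\<bar> / (2 * (\<bar>p\<bar> + 1)))"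
    by (simp add: t_def power2_eq_square field_simps)
  moreover have "\<dots> < q\<^sup>2 / (2 * (\<bar>p\<bar> + 1)) * 1"
    using q by (intro mult_strict_left_mono) (auto simp: field_simps)
  ultimately show False by linarith
qed

text \<open>The rational parametrisation \<open>(c, s) = ((1 - t\<^sup>2) / (1 + t\<^sup>2), 2t / (1 + t\<^sup>2))\<close> of the
  unit circle reduces this to the previous lemma.\<close>
lemma circle_le_zero_imp_zero:
  fixes P Q :: real
  assumes "\<And>c s. c\<^sup>2 + s\<^sup>2 = 1 \<Longrightarrow> (c - 1) * P + s * Q \<le> 0"
  shows "Q = 0"
proof (rule linear_le_quadratic_imp_zero, intro allI)
  fix t :: real
  define c where "c = (1 - t\<^sup>2) / (1 + t\<^sup>2)"
  define s where "s = 2 * t / (1 + t\<^sup>2)"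
  have pos: "1 + t\<^sup>2 > 0" by (simp add: add_pos_nonneg)
  have "c\<^sup>2 + s\<^sup>2 = 1" unfolding c_def s_def using pos
    by (simp add: field_simps) (simp add: power2_eq_square algebra_simps)
  hence "(1 + t\<^sup>2) * ((c - 1) * P + s * Q) \<le> 0"
    using assms pos by (simp add: mult_nonneg_nonpos)
  moreover have "(1 + t\<^sup>2) * (c - 1) = -2 * t\<^sup>2" "s * (1 + t\<^sup>2) = 2 * t"
    using pos by (simp_all add: c_def s_def field_simps)
  moreover have "(1 + t\<^sup>2) * ((c - 1) * P + s * Q) = ((1 + t\<^sup>2) * (c - 1)) * P + (s * (1 + t\<^sup>2)) * Q"
    by (simp add: algebra_simps)
  ultimately show "t * Q \<le> t\<^sup>2 * P" by simp
qed

section \<open>Orthonormal families maximizing a linear functional\<close>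

definition orthonormal_family :: "('k \<Rightarrow> 'a::real_inner) \<Rightarrow> bool" where
  "orthonormal_family f \<longleftrightarrow> (\<forall>a b. f a \<bullet> f b = (if a = b then 1 else 0))"

lemma inner_sum_orthonormal_family:
  fixes z :: "'k::finite \<Rightarrow> 'a::real_inner"
  assumes "orthonormal_family z"
  shows "z l \<bullet> (\<Sum>j\<in>UNIV. c j *\<^sub>R z j) = c l"
proof -
  have "z l \<bullet> (\<Sum>j\<in>UNIV. c j *\<^sub>R z j) = (\<Sum>j\<in>UNIV. if j = l then c j else 0)"
    using assms unfolding orthonormal_family_def inner_sum_right by (intro sum.cong) auto
  thus ?thesis by simp
qed

lemma orthonormal_family_rotate:
  fixes z :: "'k \<Rightarrow> 'a::real_inner"
  assumes z: "orthonormal_family z" and ab: "a \<noteq> b" and cs: "c\<^sup>2 + s\<^sup>2 = 1"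
  shows "orthonormal_family (z(a := c *\<^sub>R z a + s *\<^sub>R z b, b := c *\<^sub>R z b - s *\<^sub>R z a))"
proof -
  have zz: "z x \<bullet> z y = (if x = y then 1 else 0)" for x y
    using z by (simp add: orthonormal_family_def)
  have cs': "c * c + s * s = 1" using cs by (simp add: power2_eq_square)
  show ?thesis
    unfolding orthonormal_family_def
    using ab by (auto simp: zz cs' algebra_simps)
qed

lemma orthonormal_family_rotate_perp:
  fixes z :: "'k \<Rightarrow> 'a::real_inner"
  assumes z: "orthonormal_family z" and w: "\<And>j. w \<bullet> z j = 0" "w \<bullet> w = 1"
    and cs: "c\<^sup>2 + s\<^sup>2 = 1"
  shows "orthonormal_family (z(b := c *\<^sub>R z b + s *\<^sub>R w))"
proof -
  have zz: "z x \<bullet> z y = (if x = y then 1 else 0)" for x y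
    using z by (simp add: orthonormal_family_def)
  have w': "z j \<bullet> w = 0" for j using w(1)[of j] by (simp add: inner_commute)
  have cs': "c * c + s * s = 1" using cs by (simp add: power2_eq_square)
  show ?thesis
    unfolding orthonormal_family_def
    using w w' by (auto simp: inner_add_left inner_add_right zz cs')
qed

lemma orthonormal_family_reflect:
  fixes z :: "'k::finite \<Rightarrow> 'a::real_inner" and v :: "real^'k"
  assumes z: "orthonormal_family z" and v: "v \<noteq> 0"
  defines "w \<equiv> \<Sum>l\<in>UNIV. v$l *\<^sub>R z l"
  shows "orthonormal_family (\<lambda>j. z j - (2 / (v \<bullet> v) * v$j) *\<^sub>R w)"
proof -
  define k where "k = 2 / (v \<bullet> v)"
  have k: "k * (v \<bullet> v) = 2" using v by (simp add: k_def)
  have zz: "z x \<bullet> z y = (if x = y then 1 else 0)" for x y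
    using z by (simp add: orthonormal_family_def)
  have zw: "z j \<bullet> w = v$j" for j unfolding w_def by (rule inner_sum_orthonormal_family[OF z])
  hence wz: "w \<bullet> z j = v$j" for j by (simp add: inner_commute)
  have ww: "w \<bullet> w = v \<bullet> v"
    by (simp add: w_def inner_sum_left zw[unfolded w_def] inner_vec_def)
  have "(z x - (k * v$x) *\<^sub>R w) \<bullet> (z y - (k * v$y) *\<^sub>R w)
      = z x \<bullet> z y - 2 * (k * v$x * v$y) + (k * (v \<bullet> v)) * (k * v$x * v$y)" for x y
    by (simp add: zw wz ww algebra_simps)
  thus ?thesis by (simp add: orthonormal_family_def k zz flip: k_def)
qed

lemma sum_inner_fun_upd:
  fixes f m :: "'k::finite \<Rightarrow> 'a::real_inner"
  shows "(\<Sum>j\<in>UNIV. (f(a := p)) j \<bullet> m j) = (\<Sum>j\<in>UNIV. f j \<bullet> m j) + (p - f a) \<bullet> m a"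
proof -
  have "(\<Sum>j\<in>UNIV. (f(a := p)) j \<bullet> m j)
      = (\<Sum>j\<in>UNIV. f j \<bullet> m j + (if j = a then (p - f a) \<bullet> m a else 0))"
    by (rule sum.cong) (auto simp: inner_diff_left)
  thus ?thesis by (simp add: sum.distrib)
qed

locale orthonormal_maximizer =
  fixes z m :: "'k::finite \<Rightarrow> 'a::real_inner"
  assumes orthonormal: "orthonormal_family z"
    and maximal: "\<And>f. orthonormal_family f \<Longrightarrow> (\<Sum>j\<in>UNIV. f j \<bullet> m j) \<le> (\<Sum>j\<in>UNIV. z j \<bullet> m j)"
begin

lemma inner_swap: "z b \<bullet> m a = z a \<bullet> m b"
proof (cases "a = b")
  case ab: False
  have "(c - 1) * (z a \<bullet> m a + z b \<bullet> m b) + s * (z b \<bullet> m a - z a \<bullet> m b) \<le> 0"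
    if cs: "c\<^sup>2 + s\<^sup>2 = 1" for c s
  proof -
    let ?f = "z(a := c *\<^sub>R z a + s *\<^sub>R z b, b := c *\<^sub>R z b - s *\<^sub>R z a)"
    have "(\<Sum>j\<in>UNIV. ?f j \<bullet> m j) \<le> (\<Sum>j\<in>UNIV. z j \<bullet> m j)"
      by (rule maximal[OF orthonormal_family_rotate[OF orthonormal ab cs]])
    moreover have "(\<Sum>j\<in>UNIV. ?f j \<bullet> m j) = (\<Sum>j\<in>UNIV. z j \<bullet> m j)
        + ((c - 1) * (z a \<bullet> m a + z b \<bullet> m b) + s * (z b \<bullet> m a - z a \<bullet> m b))"
      using ab by (simp only: sum_inner_fun_upd) (simp add: algebra_simps)
    ultimately show ?thesis by simp
  qed
  from circle_le_zero_imp_zero[OF this] show ?thesis by simp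
qed simp

lemma inner_perp_eq_0:
  assumes w: "\<And>j. w \<bullet> z j = 0" "w \<bullet> w = 1"
  shows "w \<bullet> m b = 0"
proof (rule circle_le_zero_imp_zero)
  fix c s :: real assume cs: "c\<^sup>2 + s\<^sup>2 = 1"
  let ?f = "z(b := c *\<^sub>R z b + s *\<^sub>R w)"
  have "(\<Sum>j\<in>UNIV. ?f j \<bullet> m j) \<le> (\<Sum>j\<in>UNIV. z j \<bullet> m j)"
    by (rule maximal[OF orthonormal_family_rotate_perp[OF orthonormal w cs]])
  moreover have "(\<Sum>j\<in>UNIV. ?f j \<bullet> m j)
      = (\<Sum>j\<in>UNIV. z j \<bullet> m j) + ((c - 1) * (z b \<bullet> m b) + s * (w \<bullet> m b))"
    by (simp only: sum_inner_fun_upd) (simp add: algebra_simps)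
  ultimately show "(c - 1) * (z b \<bullet> m b) + s * (w \<bullet> m b) \<le> 0" by simp
qed

lemma in_span: "m b = (\<Sum>j\<in>UNIV. (z j \<bullet> m b) *\<^sub>R z j)"
proof (rule ccontr)
  define r where "r = m b - (\<Sum>j\<in>UNIV. (z j \<bullet> m b) *\<^sub>R z j)"
  assume "m b \<noteq> (\<Sum>j\<in>UNIV. (z j \<bullet> m b) *\<^sub>R z j)"
  hence nr: "norm r > 0" by (simp add: r_def)
  have "z l \<bullet> r = 0" for l
    using inner_sum_orthonormal_family[OF orthonormal, of l "\<lambda>j. z j \<bullet> m b"]
    by (simp add: r_def inner_diff_right)
  hence rz: "r \<bullet> z l = 0" for l by (simp add: inner_commute)
  have "r \<bullet> m b = r \<bullet> r"
    by (simp add: r_def inner_diff_right inner_sum_right rz[unfolded r_def])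
  moreover have "(1 / norm r) *\<^sub>R r \<bullet> m b = 0"
    using nr rz by (intro inner_perp_eq_0) (simp_all add: dot_square_norm power2_eq_square)
  ultimately show False using nr by (simp add: dot_square_norm)
qed

lemma quadratic_form_nonneg:
  "(\<Sum>j\<in>UNIV. v$j * (\<Sum>l\<in>UNIV. v$l * (z l \<bullet> m j))) \<ge> 0"
proof (cases "v = 0")
  case False
  define w where "w = (\<Sum>l\<in>UNIV. v$l *\<^sub>R z l)"
  define k where "k = 2 / (v \<bullet> v)"
  have "(\<Sum>j\<in>UNIV. (z j - (k * v$j) *\<^sub>R w) \<bullet> m j) \<le> (\<Sum>j\<in>UNIV. z j \<bullet> m j)"
    using maximal[OF orthonormal_family_reflect[OF orthonormal False]] by (simp add: w_def k_def)
  moreover have "(\<Sum>j\<in>UNIV. (z j - (k * v$j) *\<^sub>R w) \<bullet> m j)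
      = (\<Sum>j\<in>UNIV. z j \<bullet> m j) - k * (\<Sum>j\<in>UNIV. v$j * (\<Sum>l\<in>UNIV. v$l * (z l \<bullet> m j)))"
    by (simp add: w_def inner_diff_left inner_sum_left sum_subtractf sum_distrib_left mult.assoc)
  moreover have "k > 0" using False by (simp add: k_def)
  ultimately show ?thesis by (simp add: zero_le_mult_iff)
qed simp

end

section \<open>The Stiefel manifold\<close>

lemma stiefel_iff_orthonormal_columns:
  "Z \<in> stiefel \<longleftrightarrow> orthonormal_family (\<lambda>j. column j Z)"
  by (simp add: stiefel_def orthonormal_family_def vec_eq_iff matrix_matrix_mult_def
      transpose_def mat_def column_def inner_vec_def)

lemma stiefel_mult_orthogonal:
  assumes "U \<in> stiefel" and "orthogonal_matrix V"
  shows "U ** transpose V \<in> stiefel"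
proof -
  have "transpose (U ** transpose V) ** (U ** transpose V) = V ** ((transpose U ** U) ** transpose V)"
    by (simp add: matrix_transpose_mul matrix_mul_assoc)
  thus ?thesis using assms by (simp add: stiefel_def orthogonal_matrix_def)
qed

lemma trace_transpose_mult:
  "trace (transpose Z ** M) = (\<Sum>j\<in>UNIV. column j Z \<bullet> column j (M::real^'k^'m))"
  by (simp add: trace_def matrix_matrix_mult_def transpose_def column_def inner_vec_def)

lemma stiefel_nonempty:
  assumes "CARD('k::finite) \<le> CARD('m::finite)"
  shows "(stiefel :: (real^'k^'m) set) \<noteq> {}"
proof -
  obtain f :: "'k \<Rightarrow> 'm" where f: "inj f"
    using card_le_inj[of "UNIV::'k set" "UNIV::'m set"] assms by auto
  define Z :: "real^'k^'m" where "Z = (\<chi> i j. if i = f j then 1 else 0)"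
  have "column a Z \<bullet> column b Z = (\<Sum>i\<in>UNIV. if i = f a then (if f a = f b then 1 else 0) else 0)"
    for a b unfolding Z_def column_def inner_vec_def by (rule sum.cong) auto
  hence "Z \<in> stiefel"
    using f by (simp add: stiefel_iff_orthonormal_columns orthonormal_family_def inj_eq)
  thus ?thesis by blast
qed

lemma stiefel_compact: "compact (stiefel :: (real^'k::finite^'m::finite) set)"
proof (subst compact_eq_bounded_closed, rule conjI)
  have "norm (column j Z) = 1" if "Z \<in> stiefel" for Z :: "real^'k^'m" and j
    using that by (simp add: stiefel_iff_orthonormal_columns orthonormal_family_def norm_eq_sqrt_inner)
  hence entry: "\<bar>Z$i$j\<bar> \<le> 1" if "Z \<in> stiefel" for Z :: "real^'k^'m" and i j
    using component_le_norm_cart[of "column j Z" i] that by (simp add: column_def)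
  have "norm Z \<le> (\<Sum>i\<in>(UNIV::'m set). \<Sum>j\<in>(UNIV::'k set). 1)" if Z: "Z \<in> stiefel" for Z :: "real^'k^'m"
  proof -
    have "norm Z \<le> (\<Sum>i\<in>UNIV. \<bar>norm (Z$i)\<bar>)" unfolding norm_vec_def by (rule L2_set_le_sum_abs)
    also have "\<dots> \<le> (\<Sum>i\<in>UNIV. \<Sum>j\<in>UNIV. \<bar>Z$i$j\<bar>)"
      by (intro sum_mono) (simp add: norm_le_l1_cart)
    also have "\<dots> \<le> (\<Sum>i\<in>(UNIV::'m set). \<Sum>j\<in>(UNIV::'k set). 1)"
      by (intro sum_mono entry[OF Z])
    finally show ?thesis .
  qed
  thus "bounded (stiefel :: (real^'k^'m) set)" unfolding bounded_iff by blast
  have "stiefel = (\<Inter>a. \<Inter>b. {Z::real^'k^'m. (\<Sum>i\<in>UNIV. Z$i$a * Z$i$b) = (if a = b then 1 else 0)})"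
    by (auto simp: stiefel_iff_orthonormal_columns orthonormal_family_def column_def inner_vec_def)
  moreover have "closed {Z::real^'k^'m. (\<Sum>i\<in>UNIV. Z$i$a * Z$i$b) = (if a = b then 1 else 0)}" for a b
    by (rule closed_Collect_eq) (intro continuous_intros)+
  ultimately show "closed (stiefel :: (real^'k^'m) set)" by (metis (no_types, lifting) closed_INT)
qed

lemma stiefel_trace_maximizer_exists:
  fixes M :: "real^'k::finite^'m::finite"
  assumes "CARD('k) \<le> CARD('m)"
  obtains Z where "Z \<in> stiefel" "\<And>Z'. Z' \<in> stiefel \<Longrightarrow> trace (transpose Z' ** M) \<le> trace (transpose Z ** M)"
proof -
  have "continuous_on stiefel (\<lambda>Z::real^'k^'m. trace (transpose Z ** M))"
    unfolding trace_def matrix_matrix_mult_def transpose_def by simp (intro continuous_intros)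
  thus ?thesis
    using continuous_attains_sup[OF stiefel_compact stiefel_nonempty[OF assms]] that by blast
qed

section \<open>Positive semidefinite matrices and their square roots\<close>

lemma psd_symmetric: "psd G \<Longrightarrow> transpose G = G"
  by (simp add: psd_def)

lemma symmetric_entry: "transpose R = R \<Longrightarrow> R$i$k = R$k$i"
  by (metis transpose_def vec_lambda_beta)

lemma psd_kernel:
  assumes R: "psd R" and x: "x \<bullet> ((R::real^'n^'n) *v x) = 0"
  shows "R *v x = 0"
proof -
  have "y \<bullet> (R *v x) = 0" for y
  proof -
    have "t * (2 * (y \<bullet> (R *v x))) \<le> t\<^sup>2 * (y \<bullet> (R *v y))" for t
    proof -
      have "0 \<le> (x - t *\<^sub>R y) \<bullet> (R *v (x - t *\<^sub>R y))" using R by (simp add: psd_def)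
      also have "\<dots> = x \<bullet> (R *v x) - t * (x \<bullet> (R *v y)) - t * (y \<bullet> (R *v x)) + t\<^sup>2 * (y \<bullet> (R *v y))"
        by (simp add: power2_eq_square algebra_simps)
      also have "x \<bullet> (R *v y) = y \<bullet> (R *v x)"
        using psd_symmetric[OF R] by (metis dot_lmul_matrix inner_commute transpose_matrix_vector)
      finally show ?thesis using x by simp
    qed
    hence "2 * (y \<bullet> (R *v x)) = 0" by (intro linear_le_quadratic_imp_zero) blast
    thus ?thesis by simp
  qed
  from this[of "R *v x"] show ?thesis by simp
qed

lemma trace_symmetric_conj:
  assumes "transpose T = T"
  shows "trace (T ** (R ** T)) = (\<Sum>i\<in>UNIV. column i T \<bullet> ((R::real^'n^'n) *v column i T))"
  by (simp add: trace_def matrix_matrix_mult_def matrix_vector_mult_def inner_vec_def column_def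
      symmetric_entry[OF assms] sum_distrib_left mult.commute)

lemma psd_trace_conj_eq_0:
  assumes R: "psd R" and T: "transpose T = T" and "trace (T ** (R ** T)) \<le> 0"
  shows "R ** T = 0"
proof -
  let ?q = "\<lambda>i. column i T \<bullet> (R *v column i T)"
  have nonneg: "0 \<le> ?q i" for i
    using R by (simp add: psd_def)
  have "sum ?q UNIV = 0"
    using assms(3) sum_nonneg[of UNIV ?q] nonneg unfolding trace_symmetric_conj[OF T] by simp
  hence "?q i = 0" for i
    using sum_nonneg_eq_0_iff[of UNIV ?q] nonneg by simp
  hence "R *v column i T = 0" for i by (rule psd_kernel[OF R])
  thus ?thesis
    by (simp add: vec_eq_iff matrix_matrix_mult_def matrix_vector_mult_def column_def)
qed

lemma matrix_diff_ldistrib: "(A::real^'n^'m) ** (B - C) = A ** B - A ** C"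
  by (simp add: vec_eq_iff matrix_matrix_mult_def sum_subtractf algebra_simps)

lemma matrix_diff_rdistrib: "((B::real^'n^'m) - C) ** A = B ** A - C ** A"
  by (simp add: vec_eq_iff matrix_matrix_mult_def sum_subtractf algebra_simps)

lemma transpose_diff: "transpose (A - B) = transpose A - transpose (B::real^'n^'m)"
  by (simp add: vec_eq_iff transpose_def)

text \<open>With \<open>T = R\<^sub>1 - R\<^sub>2\<close>, the identity \<open>R\<^sub>1 T + T R\<^sub>2 = 0\<close> gives
  \<open>tr(T R\<^sub>1 T) + tr(T R\<^sub>2 T) = 0\<close> with both terms nonnegative, so \<open>R\<^sub>1 T = R\<^sub>2 T = 0\<close>
  and hence \<open>T\<^sup>2 = 0\<close>.\<close>
lemma psd_square_inj:
  assumes R1: "psd R1" and R2: "psd R2" and eq: "R1 ** R1 = (R2::real^'n^'n) ** R2"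
  shows "R1 = R2"
proof -
  define T where "T = R1 - R2"
  have T: "transpose T = T"
    using psd_symmetric[OF R1] psd_symmetric[OF R2] by (simp add: T_def transpose_diff)
  have "R1 ** T + T ** R2 = 0"
    using eq by (simp add: T_def matrix_diff_ldistrib matrix_diff_rdistrib matrix_mul_assoc)
  hence "T ** (R1 ** T + T ** R2) = 0" by (simp add: vec_eq_iff matrix_matrix_mult_def)
  hence "trace (T ** (R1 ** T)) + trace (T ** (T ** R2)) = 0"
    by (metis matrix_add_ldistrib trace_add trace_0 mat_0)
  moreover have "trace (T ** (T ** R2)) = trace (T ** (R2 ** T))"
    by (metis matrix_mul_assoc trace_mul_sym)
  moreover have "trace (T ** (R1 ** T)) \<ge> 0" "trace (T ** (R2 ** T)) \<ge> 0"
    using R1 R2 by (auto simp: trace_symmetric_conj[OF T] psd_def intro: sum_nonneg)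
  ultimately have "R1 ** T = 0" "R2 ** T = 0"
    using psd_trace_conj_eq_0[OF R1 T] psd_trace_conj_eq_0[OF R2 T] by linarith+
  hence "T ** T = 0" by (simp add: T_def matrix_diff_rdistrib)
  have "T$i \<bullet> T$i = (T ** T)$i$i" for i
    by (simp add: matrix_matrix_mult_def inner_vec_def symmetric_entry[OF T, of _ i])
  with \<open>T ** T = 0\<close> show ?thesis by (simp add: T_def vec_eq_iff)
qed

lemma psd_sqrt_eqI: "psd S \<Longrightarrow> S ** S = A \<Longrightarrow> psd_sqrt A = S"
  unfolding psd_sqrt_def by (rule the_equality) (auto intro: psd_square_inj)

lemma psd_conjugate:
  assumes G: "psd G"
  shows "psd (W ** G ** transpose (W::real^'k^'m))"
proof -
  have "x \<bullet> ((W ** G ** transpose W) *v x) = (transpose W *v x) \<bullet> (G *v (transpose W *v x))" for x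
    by (simp add: matrix_vector_mul_assoc[symmetric] dot_lmul_matrix[symmetric])
  thus ?thesis
    using G by (simp add: psd_def matrix_transpose_mul matrix_mul_assoc)
qed

lemma psd_diagonal:
  assumes "\<forall>i j. i \<noteq> j \<longrightarrow> D$i$j = 0" and "\<forall>i. D$i$i \<ge> 0"
  shows "psd (D::real^'k::finite^'k)"
proof -
  have "y \<bullet> (D *v y) = (\<Sum>i\<in>UNIV. D$i$i * (y$i * y$i))" for y
  proof -
    have "y \<bullet> (D *v y) = (\<Sum>i\<in>UNIV. y$i * (\<Sum>j\<in>UNIV. if j = i then D$i$i * y$j else 0))"
      unfolding inner_vec_def matrix_vector_mult_def vec_lambda_beta inner_real_def
      using assms(1) by (intro sum.cong refl arg_cong2[where f = "(*)"]) auto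
    thus ?thesis by (simp add: algebra_simps)
  qed
  moreover have "transpose D = D"
    using assms(1) unfolding vec_eq_iff transpose_def by (metis vec_lambda_beta)
  ultimately show ?thesis
    using assms(2) by (simp add: psd_def sum_nonneg)
qed

section \<open>Polar decomposition\<close>

definition polar_decomposition :: "real^'k^'m \<Rightarrow> real^'k^'m \<Rightarrow> real^'k^'k \<Rightarrow> bool" where
  "polar_decomposition M Z G \<longleftrightarrow> Z \<in> stiefel \<and> psd G \<and> M = Z ** G"

lemma trace_maximizer_polar_decomposition:
  fixes M :: "real^'k::finite^'m::finite"
  assumes Z: "Z \<in> stiefel"
    and max: "\<And>Z'. Z' \<in> stiefel \<Longrightarrow> trace (transpose Z' ** M) \<le> trace (transpose Z ** M)"
  shows "polar_decomposition M Z (transpose Z ** M)"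
proof -
  interpret orthonormal_maximizer "\<lambda>j. column j Z" "\<lambda>j. column j M"
  proof
    show "orthonormal_family (\<lambda>j. column j Z)"
      using Z by (simp add: stiefel_iff_orthonormal_columns)
    fix f :: "'k \<Rightarrow> real^'m"
    assume "orthonormal_family f"
    hence "(\<chi> i j. f j $ i) \<in> stiefel"
      by (simp add: stiefel_iff_orthonormal_columns column_def)
    from max[OF this] show "(\<Sum>j\<in>UNIV. f j \<bullet> column j M) \<le> (\<Sum>j\<in>UNIV. column j Z \<bullet> column j M)"
      by (simp add: trace_transpose_mult column_def)
  qed
  define G where "G = transpose Z ** M"
  have G: "G$a$b = column a Z \<bullet> column b M" for a b
    by (simp add: G_def matrix_matrix_mult_def transpose_def column_def inner_vec_def)
  have G': "G$a$b = column b Z \<bullet> column a M" for a b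
    by (simp add: G inner_swap)
  have "transpose G = G" by (auto simp: vec_eq_iff transpose_def G intro: inner_swap)
  moreover have "x \<bullet> (G *v x) \<ge> 0" for x
    using quadratic_form_nonneg[of x]
    by (simp add: inner_vec_def matrix_vector_mult_def G' mult.commute)
  moreover have "M = Z ** G"
  proof -
    have "M$i$b = (Z ** G)$i$b" for i b
      using arg_cong[OF in_span[of b], of "\<lambda>v. v$i"]
      by (simp add: matrix_matrix_mult_def G column_def mult.commute)
    thus ?thesis by (simp add: vec_eq_iff)
  qed
  ultimately show ?thesis
    using Z unfolding polar_decomposition_def psd_def G_def[symmetric] by blast
qed

lemma polar_decomposition_exists:
  fixes M :: "real^'k::finite^'m::finite"
  assumes "CARD('k) \<le> CARD('m)"
  obtains Z G where "polar_decomposition M Z G"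
proof -
  obtain Z where "Z \<in> stiefel"
    and "\<And>Z'. Z' \<in> stiefel \<Longrightarrow> trace (transpose Z' ** M) \<le> trace (transpose Z ** M)"
    using stiefel_trace_maximizer_exists[OF assms] by blast
  hence "polar_decomposition M Z (transpose Z ** M)"
    by (rule trace_maximizer_polar_decomposition)
  thus thesis by (rule that)
qed

lemma polar_decomposition_transpose_mult:
  assumes "polar_decomposition M Z G"
  shows "transpose Z ** M = G"
proof -
  have "transpose Z ** M = (transpose Z ** Z) ** G"
    using assms by (simp add: polar_decomposition_def matrix_mul_assoc)
  thus ?thesis using assms by (simp add: polar_decomposition_def stiefel_def)
qed

lemma polar_decomposition_gram:
  assumes "polar_decomposition M Z G"
  shows "transpose M ** M = G ** G"
proof -
  have "transpose M ** M = transpose G ** ((transpose Z ** Z) ** G)"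
    using assms by (simp add: polar_decomposition_def matrix_transpose_mul matrix_mul_assoc)
  thus ?thesis
    using assms by (simp add: polar_decomposition_def stiefel_def psd_symmetric)
qed

lemma polar_decomposition_psd_sqrt:
  assumes "polar_decomposition M Z G"
  shows "psd_sqrt (transpose M ** M) = G"
proof (rule psd_sqrt_eqI)
  show "psd G" using assms by (simp add: polar_decomposition_def)
  show "G ** G = transpose M ** M" using polar_decomposition_gram[OF assms] by simp
qed

lemma trace_polar_decomposition:
  "polar_decomposition M Z G \<Longrightarrow> trace (transpose Z ** M) = trace (psd_sqrt (transpose M ** M))"
  by (simp add: polar_decomposition_transpose_mult polar_decomposition_psd_sqrt)

lemma trace_stiefel_le_trace_psd_sqrt:
  fixes M :: "real^'k::finite^'m::finite"
  assumes "CARD('k) \<le> CARD('m)" and "Z \<in> stiefel"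
  shows "trace (transpose Z ** M) \<le> trace (psd_sqrt (transpose M ** M))"
proof -
  obtain Z0 where "Z0 \<in> stiefel"
    and max: "\<And>Z'. Z' \<in> stiefel \<Longrightarrow> trace (transpose Z' ** M) \<le> trace (transpose Z0 ** M)"
    using stiefel_trace_maximizer_exists[OF assms(1)] by blast
  hence "polar_decomposition M Z0 (transpose Z0 ** M)"
    by (rule trace_maximizer_polar_decomposition)
  with max[OF assms(2)] show ?thesis by (simp add: trace_polar_decomposition)
qed

lemma thin_svd_polar_decomposition:
  assumes "thin_svd M U D V"
  shows "polar_decomposition M (U ** transpose V) (V ** D ** transpose V)"
proof -
  have U: "U \<in> stiefel" and V: "orthogonal_matrix V" and M: "M = U ** D ** transpose V"
    and D: "psd D"
    using assms psd_diagonal by (auto simp: thin_svd_def)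
  have "(U ** transpose V) ** (V ** D ** transpose V) = U ** (transpose V ** V) ** D ** transpose V"
    by (simp add: matrix_mul_assoc)
  thus ?thesis
    using V by (simp add: polar_decomposition_def stiefel_mult_orthogonal[OF U V] psd_conjugate[OF D]
        orthogonal_matrix_def M)
qed

text \<open>\<open>X\<close> is padded with zero rows so that a polar decomposition exists even if \<open>N < P\<close>.\<close>
lemma psd_sqrt_gram:
  fixes X :: "real^'p::finite^'n::finite"
  shows "psd (psd_sqrt (transpose X ** X))"
    and "psd_sqrt (transpose X ** X) ** psd_sqrt (transpose X ** X) = transpose X ** X"
proof -
  define X' :: "real^'p^('n + 'p)" where "X' = (\<chi> i. case i of Inl a \<Rightarrow> X$a | Inr b \<Rightarrow> 0)"
  have "CARD('p) \<le> CARD('n + 'p)"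
    by (rule card_inj_on_le[of Inr]) (auto simp: inj_on_def)
  then obtain Z G where ZG: "polar_decomposition X' Z G"
    by (rule polar_decomposition_exists)
  have "(\<Sum>i\<in>UNIV. f i) = (\<Sum>a\<in>UNIV. f (Inl a)) + (\<Sum>b\<in>UNIV. f (Inr b))"
    for f :: "'n + 'p \<Rightarrow> real"
    using sum.Plus[of "UNIV::'n set" "UNIV::'p set" f] by simp
  hence "transpose X' ** X' = transpose X ** X"
    by (simp add: vec_eq_iff matrix_matrix_mult_def transpose_def X'_def)
  hence "psd_sqrt (transpose X ** X) = G" and "G ** G = transpose X ** X"
    using polar_decomposition_psd_sqrt[OF ZG] polar_decomposition_gram[OF ZG] by simp_all
  moreover have "psd G" using ZG by (simp add: polar_decomposition_def)
  ultimately show "psd (psd_sqrt (transpose X ** X))"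
    and "psd_sqrt (transpose X ** X) ** psd_sqrt (transpose X ** X) = transpose X ** X"
    by simp_all
qed

lemma trace_psd_sqrt_mult_transpose:
  fixes M :: "real^'k::finite^'m::finite"
  assumes "CARD('k) \<le> CARD('m)"
  shows "trace (psd_sqrt (M ** transpose M)) = trace (psd_sqrt (transpose M ** M))"
proof -
  obtain Z G where ZG: "polar_decomposition M Z G"
    using polar_decomposition_exists[OF assms] .
  hence Z: "transpose Z ** Z = mat 1" and G: "psd G" and M: "M = Z ** G"
    by (simp_all add: polar_decomposition_def stiefel_def)
  have "(Z ** G ** transpose Z) ** (Z ** G ** transpose Z)
      = (Z ** G) ** (transpose Z ** Z) ** (G ** transpose Z)"
    by (simp add: matrix_mul_assoc)
  also have "\<dots> = (Z ** G) ** transpose (Z ** G)"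
    by (simp add: Z matrix_transpose_mul psd_symmetric[OF G])
  finally have "(Z ** G ** transpose Z) ** (Z ** G ** transpose Z) = M ** transpose M"
    by (simp add: M)
  hence "psd_sqrt (M ** transpose M) = Z ** G ** transpose Z"
    by (rule psd_sqrt_eqI[OF psd_conjugate[OF G]])
  moreover have "trace (Z ** G ** transpose Z) = trace (transpose Z ** (Z ** G))"
    by (rule trace_mul_sym)
  hence "trace (Z ** G ** transpose Z) = trace G"
    by (simp add: Z matrix_mul_assoc)
  ultimately show ?thesis by (simp add: polar_decomposition_psd_sqrt[OF ZG])
qed

section \<open>The two objectives\<close>

lemma trace_transpose: "trace (transpose A) = trace (A::real^'n^'n)"
  by (simp add: trace_def transpose_def)

lemma frob_norm_sq_trace: "(frob_norm B)\<^sup>2 = trace (transpose B ** B)"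
proof -
  have "(frob_norm B)\<^sup>2 = (\<Sum>i\<in>UNIV. \<Sum>j\<in>UNIV. (B$i$j)\<^sup>2)"
    unfolding frob_norm_def by (simp add: sum_nonneg)
  also have "\<dots> = trace (transpose B ** B)"
    by (simp add: trace_def matrix_matrix_mult_def transpose_def power2_eq_square) (rule sum.swap)
  finally show ?thesis .
qed

lemma frob_norm_sq_stiefel:
  fixes X :: "real^'p::finite^'n::finite" and L :: "real^'k::finite^'p"
  assumes Z: "Z \<in> stiefel"
  shows "(frob_norm (X - Z ** transpose L))\<^sup>2
     = trace (transpose X ** X) - 2 * trace (transpose Z ** (X ** L)) + trace (L ** transpose L)"
proof -
  have "transpose (X - Z ** transpose L) ** (X - Z ** transpose L)
     = transpose X ** X - transpose X ** (Z ** transpose L) - (L ** transpose Z) ** X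
       + (L ** transpose Z) ** (Z ** transpose L)"
    by (simp add: transpose_diff matrix_transpose_mul matrix_diff_ldistrib matrix_diff_rdistrib)
  moreover have "trace ((L ** transpose Z) ** X) = trace (transpose Z ** (X ** L))"
    using trace_mul_sym[of L "transpose Z ** X"] by (simp add: matrix_mul_assoc)
  moreover have "trace (transpose X ** (Z ** transpose L)) = trace ((L ** transpose Z) ** X)"
    using trace_transpose[of "transpose X ** (Z ** transpose L)"]
    by (simp add: matrix_transpose_mul matrix_mul_assoc)
  moreover have "(L ** transpose Z) ** (Z ** transpose L) = L ** ((transpose Z ** Z) ** transpose L)"
    by (simp add: matrix_mul_assoc)
  ultimately show ?thesis
    using Z by (simp add: stiefel_def frob_norm_sq_trace trace_add trace_sub)
qed

lemma bw_dist_gram_sq: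
  fixes X :: "real^'p::finite^'n::finite" and L :: "real^'k::finite^'p"
  assumes "CARD('k) \<le> CARD('n)" and "CARD('k) \<le> CARD('p)"
  shows "(bw_dist (transpose X ** X) (L ** transpose L))\<^sup>2
     = trace (transpose X ** X) - 2 * trace (psd_sqrt (transpose (X ** L) ** (X ** L)))
       + trace (L ** transpose L)"
proof -
  define S where "S = psd_sqrt (transpose X ** X)"
  have S: "transpose S = S" "S ** S = transpose X ** X"
    using psd_sqrt_gram[of X] by (simp_all add: S_def psd_symmetric)
  have "S ** (L ** transpose L) ** S = (S ** L) ** transpose (S ** L)"
    by (simp add: matrix_transpose_mul S matrix_mul_assoc)
  moreover have "transpose (S ** L) ** (S ** L) = transpose (X ** L) ** (X ** L)"
  proof -
    have "transpose (S ** L) ** (S ** L) = transpose L ** (S ** S) ** L"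
      by (simp add: matrix_transpose_mul S(1) matrix_mul_assoc)
    thus ?thesis by (simp add: matrix_transpose_mul S(2) matrix_mul_assoc)
  qed
  ultimately have tr: "trace (psd_sqrt (S ** (L ** transpose L) ** S))
      = trace (psd_sqrt (transpose (X ** L) ** (X ** L)))"
    using trace_psd_sqrt_mult_transpose[OF assms(2), of "S ** L"] by simp
  obtain Z G where ZG: "polar_decomposition (X ** L) Z G"
    using polar_decomposition_exists[OF assms(1)] .
  have "0 \<le> (frob_norm (X - Z ** transpose L))\<^sup>2" by simp
  also have "\<dots> = trace (transpose X ** X) - 2 * trace (psd_sqrt (transpose (X ** L) ** (X ** L)))
       + trace (L ** transpose L)"
    using ZG frob_norm_sq_stiefel[of Z X L] trace_polar_decomposition[OF ZG]
    by (simp add: polar_decomposition_def)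
  finally show ?thesis
    unfolding bw_dist_def S_def[symmetric] tr by simp
qed

lemma obj_bw_le_obj_pca:
  fixes X :: "real^'p::finite^'n::finite" and L :: "real^'k::finite^'p"
  assumes "CARD('k) \<le> CARD('n)" and "CARD('k) \<le> CARD('p)" and "Z \<in> stiefel"
  shows "obj_bw X pen L \<le> obj_pca X pen Z L"
  using trace_stiefel_le_trace_psd_sqrt[OF assms(1,3), of "X ** L"] assms
  by (simp add: obj_bw_def obj_pca_def bw_dist_gram_sq frob_norm_sq_stiefel)

lemma obj_pca_polar_decomposition:
  fixes X :: "real^'p::finite^'n::finite" and L :: "real^'k::finite^'p"
  assumes "CARD('k) \<le> CARD('n)" and "CARD('k) \<le> CARD('p)"
    and "polar_decomposition (X ** L) Z G"
  shows "obj_pca X pen Z L = obj_bw X pen L"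
proof -
  have "Z \<in> stiefel" using assms(3) by (simp add: polar_decomposition_def)
  thus ?thesis
    using trace_polar_decomposition[OF assms(3)] frob_norm_sq_stiefel[of Z X L]
    by (simp add: obj_bw_def obj_pca_def bw_dist_gram_sq[OF assms(1,2)])
qed

theorem theorem1:
  fixes X :: "real^'p::finite^'n::finite"
    and pen :: "'k::finite \<Rightarrow> real^'p \<Rightarrow> real"
    and Zh :: "real^'k^'n" and Lh :: "real^'k^'p"
  assumes "CARD('k) \<le> CARD('n)" and "CARD('k) \<le> CARD('p)"
  shows "(is_min_pca X pen Zh Lh \<longrightarrow> is_min_bw X pen Lh)
    \<and> (\<forall>U D V. is_min_bw X pen Lh \<and> thin_svd (X ** Lh) U D V
          \<longrightarrow> is_min_pca X pen (U ** transpose V) Lh)"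
proof (intro conjI impI allI)
  assume min: "is_min_pca X pen Zh Lh"
  show "is_min_bw X pen Lh" unfolding is_min_bw_def
  proof
    fix L' :: "real^'k^'p"
    obtain Z' :: "real^'k^'n" and G' where polar: "polar_decomposition (X ** L') Z' G'"
      using polar_decomposition_exists[OF assms(1)] .
    have "obj_bw X pen Lh \<le> obj_pca X pen Zh Lh"
      using min by (simp add: is_min_pca_def obj_bw_le_obj_pca[OF assms])
    also have "\<dots> \<le> obj_pca X pen Z' L'"
      using min polar by (simp add: is_min_pca_def polar_decomposition_def)
    also have "\<dots> = obj_bw X pen L'"
      by (rule obj_pca_polar_decomposition[OF assms polar])
    finally show "obj_bw X pen Lh \<le> obj_bw X pen L'" .
  qed
next
  fix U D V
  assume "is_min_bw X pen Lh \<and> thin_svd (X ** Lh) U D V"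
  hence min: "is_min_bw X pen Lh"
    and polar: "polar_decomposition (X ** Lh) (U ** transpose V) (V ** D ** transpose V)"
    by (simp_all add: thin_svd_polar_decomposition)
  show "is_min_pca X pen (U ** transpose V) Lh" unfolding is_min_pca_def
  proof (intro conjI allI impI)
    show "U ** transpose V \<in> stiefel" using polar by (simp add: polar_decomposition_def)
    fix Z' :: "real^'k^'n" and L' :: "real^'k^'p"
    assume "Z' \<in> stiefel"
    have "obj_pca X pen (U ** transpose V) Lh = obj_bw X pen Lh"
      by (rule obj_pca_polar_decomposition[OF assms polar])
    also have "\<dots> \<le> obj_bw X pen L'" using min by (simp add: is_min_bw_def)
    also have "\<dots> \<le> obj_pca X pen Z' L'" by (rule obj_bw_le_obj_pca[OF assms \<open>Z' \<in> stiefel\<close>])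
    finally show "obj_pca X pen (U ** transpose V) Lh \<le> obj_pca X pen Z' L'" .
  qed
qed

end
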